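(* If $X$ and $Y$ are directed acyclic graphs with $|V(X)|=|V(Y)|=n$, then $\mathrm{DFS}(X,Y)$ is acyclic, i.e. it contains no directed cycle.
   Context: Directed graphs are finite and loopless but may have multiple edges. For distinct vertices $a,b$ of a directed graph $X$, $m_X(a,b)\ge 0$ denotes the number of edges from $a$ to $b$ in $X$. A directed graph is acyclic if it has no directed cycle. For directed graphs $X,Y$ with $|V(X)|=|V(Y)|$, the directed friends-and-seats graph $\mathrm{DFS}(X,Y)$ is defined as follows. Its vertices are the bijections $\sigma:V(X)\to V(Y)$. For every bijection $\sigma$ and every ordered pair $(a,b)$ of distinct vertices of $X$, it has exactly $m_X(a,b)\,m_Y(\sigma(a),\sigma(b))$ edges from $\sigma$ to $\sigma\circ(a\,b)$, where $(a\,b)$ is the transposition exchanging $a$ and $b$. It has no other edges. *)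

theory Defs
  imports "HOL-Library.FuncSet" "HOL-Combinatorics.Transposition"
begin

text \<open>A finite loopless directed multigraph is given by a finite vertex set V and an
edge multiplicity function m, where m a b is the number of edges from a to b.\<close>

definition dmultigraph :: "'a set \<Rightarrow> ('a \<Rightarrow> 'a \<Rightarrow> nat) \<Rightarrow> bool" where
  "dmultigraph V m \<longleftrightarrow> finite V \<and> (\<forall>a b. m a b > 0 \<longrightarrow> a \<in> V \<and> b \<in> V \<and> a \<noteq> b)"

definition dacyclic :: "'a set \<Rightarrow> ('a \<Rightarrow> 'a \<Rightarrow> nat) \<Rightarrow> bool" where
  "dacyclic V m \<longleftrightarrow> acyclic {(a, b). a \<in> V \<and> b \<in> V \<and> m a b > 0}"

definition dfs_vertices :: "'a set \<Rightarrow> 'b set \<Rightarrow> ('a \<Rightarrow> 'b) set" where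
  "dfs_vertices VX VY = {\<sigma>. \<sigma> \<in> extensional VX \<and> bij_betw \<sigma> VX VY}"

definition dfs_mult :: "'a set \<Rightarrow> ('a \<Rightarrow> 'a \<Rightarrow> nat) \<Rightarrow> ('b \<Rightarrow> 'b \<Rightarrow> nat)
    \<Rightarrow> ('a \<Rightarrow> 'b) \<Rightarrow> ('a \<Rightarrow> 'b) \<Rightarrow> nat" where
  "dfs_mult VX mX mY \<sigma> \<tau> =
     (\<Sum>(a, b) \<in> {(a, b). a \<in> VX \<and> b \<in> VX \<and> a \<noteq> b \<and> \<tau> = \<sigma> \<circ> transpose a b}.
        mX a b * mY (\<sigma> a) (\<sigma> b))"

end

theory Submission
  imports Defs
begin

text \<open>Acyclic graphs X and Y admit strict rankings hX, hY along their edges. The potential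
  \<open>\<Phi> \<sigma> = \<Sum>x. hX x * hY (\<sigma> x)\<close> strictly decreases along every edge of DFS(X,Y):
  an edge \<sigma> \<rightarrow> \<sigma> \<circ> (a b) needs a \<rightarrow> b in X and \<sigma> a \<rightarrow> \<sigma> b in Y, and swapping the values
  at a and b changes \<Phi> by \<open>(hX b - hX a) * (hY (\<sigma> a) - hY (\<sigma> b)) < 0\<close>, as in the
  rearrangement inequality. A directed cycle would therefore return to a smaller value of \<Phi>.\<close>

lemma finite_acyclic_strict_rank:
  assumes "finite r" and "acyclic r"
  obtains h :: "'a \<Rightarrow> nat" where "\<And>a b. (a, b) \<in> r \<Longrightarrow> h a < h b"
proof
  define h where "h a = card {c. (c, a) \<in> r\<^sup>+}" for a
  fix a b
  assume ab: "(a, b) \<in> r"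
  have "finite (r\<^sup>+)" using assms(1) by (rule finite_trancl[THEN iffD2])
  then have fin: "finite {c. (c, b) \<in> r\<^sup>+}"
    by (rule finite_subset[rotated, OF finite_imageI[of _ fst]]) force
  have "{c. (c, a) \<in> r\<^sup>+} \<subset> {c. (c, b) \<in> r\<^sup>+}"
    using ab assms(2) by (auto intro: trancl_into_trancl simp: acyclic_def)
  then show "h a < h b" unfolding h_def using fin by (rule psubset_card_mono[rotated])
qed

lemma acyclic_if_strictly_decreasing:
  fixes f :: "'a \<Rightarrow> 'b :: order"
  assumes "\<And>x y. (x, y) \<in> R \<Longrightarrow> f y < f x"
  shows "acyclic R"
proof -
  have "f y < f x" if "(x, y) \<in> R\<^sup>+" for x y
    using that by (induction rule: trancl_induct) (use assms in \<open>force dest: order.strict_trans\<close>)+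
  then show ?thesis unfolding acyclic_def by blast
qed

lemma sum_mult_transpose_diff:
  fixes f g :: "'a \<Rightarrow> 'b :: comm_ring_1"
  assumes "finite A" and "a \<in> A" and "b \<in> A" and "a \<noteq> b"
  shows "(\<Sum>x\<in>A. f x * g (transpose a b x)) - (\<Sum>x\<in>A. f x * g x)
           = (f b - f a) * (g a - g b)"
proof -
  have bij: "bij_betw (transpose a b) A A"
    using assms(2,3) by simp
  have "(\<Sum>x\<in>A. f x * g (transpose a b x)) = (\<Sum>y\<in>A. f (transpose a b y) * g y)"
    using sum.reindex_bij_betw[OF bij, of "\<lambda>x. f x * g (transpose a b x)"] by simp
  then have "(\<Sum>x\<in>A. f x * g (transpose a b x)) - (\<Sum>x\<in>A. f x * g x)
               = (\<Sum>y\<in>A. (f (transpose a b y) - f y) * g y)"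
    by (simp add: sum_subtractf algebra_simps)
  also have "\<dots> = (\<Sum>y\<in>{a, b}. (f (transpose a b y) - f y) * g y)"
    by (rule sum.mono_neutral_right) (use assms in auto)
  also have "\<dots> = (f b - f a) * (g a - g b)"
    using assms(4) by (simp add: algebra_simps)
  finally show ?thesis .
qed

lemma dacyclic_strict_rank:
  assumes "dmultigraph V m" and "dacyclic V m"
  obtains h :: "'a \<Rightarrow> nat" where "\<And>a b. 0 < m a b \<Longrightarrow> h a < h b"
proof -
  let ?r = "{(a, b). a \<in> V \<and> b \<in> V \<and> 0 < m a b}"
  have "finite ?r"
    using assms(1) unfolding dmultigraph_def by (auto intro: finite_subset[of _ "V \<times> V"])
  then obtain h :: "'a \<Rightarrow> nat" where "\<And>a b. (a, b) \<in> ?r \<Longrightarrow> h a < h b"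
    using finite_acyclic_strict_rank[OF _ assms(2)[unfolded dacyclic_def]] by blast
  then show thesis using assms(1) that unfolding dmultigraph_def by blast
qed

lemma dfs_mult_posE:
  assumes "0 < dfs_mult VX mX mY \<sigma> \<tau>"
  obtains a b where "a \<in> VX" "b \<in> VX" "a \<noteq> b" "\<tau> = \<sigma> \<circ> transpose a b"
    and "0 < mX a b" and "0 < mY (\<sigma> a) (\<sigma> b)"
proof -
  from assms obtain p where
    "p \<in> {(a, b). a \<in> VX \<and> b \<in> VX \<and> a \<noteq> b \<and> \<tau> = \<sigma> \<circ> transpose a b}"
    "(case p of (a, b) \<Rightarrow> mX a b * mY (\<sigma> a) (\<sigma> b)) \<noteq> 0"
    unfolding dfs_mult_def by (rule sum.not_neutral_contains_not_neutral[OF gr_implies_not0])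
  then show thesis using that by (cases p) auto
qed

theorem mainTheorem5:
  fixes VX :: "'a set" and mX :: "'a \<Rightarrow> 'a \<Rightarrow> nat"
    and VY :: "'b set" and mY :: "'b \<Rightarrow> 'b \<Rightarrow> nat"
  assumes "dmultigraph VX mX" and "dmultigraph VY mY"
    and "dacyclic VX mX" and "dacyclic VY mY"
    and "card VX = card VY"
  shows "dacyclic (dfs_vertices VX VY) (dfs_mult VX mX mY)"
proof -
  obtain hX :: "'a \<Rightarrow> nat" where hX: "\<And>a b. 0 < mX a b \<Longrightarrow> hX a < hX b"
    using dacyclic_strict_rank[OF assms(1,3)] by blast
  obtain hY :: "'b \<Rightarrow> nat" where hY: "\<And>a b. 0 < mY a b \<Longrightarrow> hY a < hY b"
    using dacyclic_strict_rank[OF assms(2,4)] by blast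
  define \<Phi> where "\<Phi> \<sigma> = (\<Sum>x\<in>VX. int (hX x) * int (hY (\<sigma> x)))" for \<sigma> :: "'a \<Rightarrow> 'b"
  have "\<Phi> \<tau> < \<Phi> \<sigma>" if edge: "0 < dfs_mult VX mX mY \<sigma> \<tau>" for \<sigma> \<tau>
  proof -
    obtain a b where ab: "a \<in> VX" "b \<in> VX" "a \<noteq> b" and \<tau>: "\<tau> = \<sigma> \<circ> transpose a b"
      and "0 < mX a b" and "0 < mY (\<sigma> a) (\<sigma> b)"
      by (rule dfs_mult_posE[OF edge])
    then have "hX a < hX b" and "hY (\<sigma> a) < hY (\<sigma> b)" using hX hY by blast+
    have "\<Phi> \<tau> - \<Phi> \<sigma> = (int (hX b) - int (hX a)) * (int (hY (\<sigma> a)) - int (hY (\<sigma> b)))"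
      unfolding \<Phi>_def \<tau> using assms(1) ab unfolding dmultigraph_def
      by (simp add: sum_mult_transpose_diff[where g = "\<lambda>x. int (hY (\<sigma> x))"])
    also have "\<dots> < 0"
      using \<open>hX a < hX b\<close> \<open>hY (\<sigma> a) < hY (\<sigma> b)\<close> by (simp add: mult_pos_neg)
    finally show ?thesis by simp
  qed
  then show ?thesis
    unfolding dacyclic_def by (intro acyclic_if_strictly_decreasing[where f = \<Phi>]) auto
qed

end
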